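(* Let $m/n\in(0,1/2)$. Then the set $\mathcal A_{m/n}$ of $m/n$-admissible integers has the same cardinality as the left Farey sequence $\mathrm{LFS}(m/n)$.
   Context: Rationals in lowest terms. For $h/k\in(0,1/2)$, $\mathrm{LFP}(h/k)$ is the element immediately preceding $h/k$ in the increasing list of rationals in $[0,1/2]$ with denominator at most $k$. $\mathrm{LFS}(m/n)=(0=u_1/v_1,u_2/v_2,\dots,u_\alpha/v_\alpha)$ where $u_\alpha/v_\alpha=\mathrm{LFP}(m/n)$ and $u_i/v_i=\mathrm{LFP}(u_{i+1}/v_{i+1})$ for $1\le i<\alpha$. $+_n$ is addition mod $n$; $\mathcal O_{m/n}[r,s]=\{r+_njm\colon0\le j\le K\}$ with $K\ge0$ least such that $r+_nKm=s$. An integer $k\in[0,m-1]$ is $m/n$-admissible if $\{k+1,\dots,m-1\}\cap\mathcal O_{m/n}[k,0]=\emptyset$. *)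

theory Defs
  imports Complex_Main
begin

definition denom :: "rat \<Rightarrow> int" where
  "denom r = snd (quotient_of r)"

definition LFP :: "rat \<Rightarrow> rat" where
  "LFP q = Max {r. 0 \<le> r \<and> r \<le> 1/2 \<and> r < q \<and> denom r \<le> denom q}"

text \<open>The (set of entries of the) left Farey sequence LFS(q):
LFP(q) belongs to it, and LFP(u) belongs to it for every nonzero entry u;
the chain stops at 0.\<close>
inductive_set LFS :: "rat \<Rightarrow> rat set" for q :: rat where
  first: "LFP q \<in> LFS q"
| step: "u \<in> LFS q \<Longrightarrow> 0 < u \<Longrightarrow> LFP u \<in> LFS q"

definition orbit :: "nat \<Rightarrow> nat \<Rightarrow> nat \<Rightarrow> nat \<Rightarrow> nat set" where
  "orbit m n r s =
     (let K = (LEAST K. (r + K * m) mod n = s) in {(r + j * m) mod n | j. j \<le> K})"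

definition admissible :: "nat \<Rightarrow> nat \<Rightarrow> nat \<Rightarrow> bool" where
  "admissible m n k \<longleftrightarrow> k \<le> m - 1 \<and> {k+1..m-1} \<inter> orbit m n k 0 = {}"

definition admissible_set :: "nat \<Rightarrow> nat \<Rightarrow> nat set" where
  "admissible_set m n = {k. admissible m n k}"

end

theory Submission
  imports Defs "HOL-Number_Theory.Cong"
begin

(* The Farey neighbour a/b of m/n (b m - a n = 1, 0 < b <= n) is LFP(m/n), and the Farey
   neighbour of a/b has numerator (-m) mod a. Hence |LFS(m/n)| - 1 is the length of the
   negative continued fraction expansion of m/a.
   On the other side, multiplication by b = m^-1 mod n turns the orbit of k into a run of
   consecutive residues, so k > 0 is admissible iff k a mod m exceeds y a mod m for all
   k < y < m. After the reflection k -> m - k these k become the record minima of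
   z -> z a mod m, and the records other than z = 1 correspond, via z -> floor(z a / m),
   to the record minima of j -> (-j m) mod a. So both counts obey the same recursion. *)

section \<open>Farey neighbours\<close>

lemma Farey_neighbour_coprime:
  fixes a b m n :: nat
  assumes "b * m = a * n + 1"
  shows "coprime a b" "coprime m n" "coprime b n" "coprime a m"
proof -
  have unit: "c dvd 1" if "c dvd b * m" "c dvd a * n" for c
    using that assms by (metis dvd_add_right_iff)
  show "coprime a b" "coprime m n" "coprime b n" "coprime a m"
    by (auto intro!: coprimeI unit)
qed

lemma Farey_neighbour_less:
  fixes a b m n :: nat
  assumes "b * m = a * n + 1" and "b \<le> n"
  shows "a < m"
proof -
  have "a * n < b * m"
    using assms(1) by simp
  also have "\<dots> \<le> n * m"
    using assms(2) by simp
  finally show ?thesis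
    by simp
qed

lemma Farey_neighbour_exists:
  fixes m n :: nat
  assumes "coprime m n" and "1 < n"
  obtains a b where "b * m = a * n + 1" "0 < b" "b \<le> n"
proof -
  obtain x where "[m * x = 1] (mod n)"
    using cong_solve_coprime_nat[OF assms(1)] by auto
  then have bm: "(x mod n) * m mod n = 1"
    using assms(2) by (simp add: cong_def mod_mult_right_eq mult.commute[of _ m])
  then have "x mod n \<noteq> 0"
    by (metis mod_0 mult_zero_left zero_neq_one)
  moreover have "x mod n \<le> n"
    using assms(2) by simp
  moreover have "(x mod n) * m = ((x mod n) * m div n) * n + 1"
    using bm by (metis div_mult_mod_eq)
  ultimately show thesis
    using that by blast
qed

lemma Farey_neighbour_numerator_step:
  fixes a b a' b' m n :: nat
  assumes ab: "b * m = a * n + 1" and ab': "b' * a = a' * b + 1" and "b' \<le> b"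
  shows "int a' = (- int m) mod int a"
proof -
  have "int b * (int a' + int m) = int a * (int b' + int n)"
    using arg_cong[OF ab, of int] arg_cong[OF ab', of int] by (simp add: algebra_simps)
  then have "int a dvd int b * (int a' + int m)"
    by simp
  then have "int a dvd int a' - (- int m)"
    using Farey_neighbour_coprime(1)[OF ab] by (simp add: coprime_dvd_mult_right_iff)
  then have "int a' mod int a = (- int m) mod int a"
    by (simp add: mod_eq_dvd_iff)
  moreover have "a' * b < a * b"
  proof -
    have "a' * b < b' * a"
      using ab' by simp
    also have "\<dots> \<le> a * b"
      using \<open>b' \<le> b\<close> by simp
    finally show ?thesis .
  qed
  then have "int a' mod int a = int a'"
    by simp
  ultimately show ?thesis
    by simp
qed

lemma Farey_denominator_bound:
  fixes a b m n p d :: int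
  assumes "b * m = a * n + 1" and "0 \<le> b" and "0 \<le> n"
    and "a * d < p * b" and "p * n < m * d"
  shows "b + n \<le> d"
proof -
  have "n * (p * b - a * d) + b * (m * d - p * n) = d * (b * m - a * n)"
    by (simp add: algebra_simps)
  also have "\<dots> = d"
    using assms(1) by simp
  finally have "d = n * (p * b - a * d) + b * (m * d - p * n)" ..
  moreover have "n * 1 \<le> n * (p * b - a * d)" "b * 1 \<le> b * (m * d - p * n)"
    using assms(2-) by (intro mult_left_mono; simp)+
  ultimately show ?thesis
    by linarith
qed

section \<open>The left Farey sequence\<close>

lemma denom_of_nat_divide:
  assumes "0 < q" and "coprime p q"
  shows "denom (of_nat p / of_nat q) = int q"
proof -
  have "of_nat p / of_nat q = Fract (int p) (int q)"
    by (simp add: Fract_of_int_quotient)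
  then show ?thesis
    using assms by (simp add: denom_def quotient_of_Fract)
qed

lemma finite_LFP_candidates:
  "finite {r. 0 \<le> r \<and> r \<le> 1/2 \<and> r < u \<and> denom r \<le> denom u}"
proof (rule finite_subset)
  let ?D = "denom u"
  show "{r. 0 \<le> r \<and> r \<le> 1/2 \<and> r < u \<and> denom r \<le> denom u}
      \<subseteq> (\<lambda>(p, d). of_int p / of_int d) ` ({0..?D} \<times> {1..?D})"
  proof
    fix r :: rat
    assume r: "r \<in> {r. 0 \<le> r \<and> r \<le> 1/2 \<and> r < u \<and> denom r \<le> denom u}"
    obtain p d where pd: "quotient_of r = (p, d)"
      by (cases "quotient_of r")
    have d: "0 < d" and r_eq: "r = of_int p / of_int d"
      using quotient_of_denom_pos[OF pd] quotient_of_div[OF pd] by simp_all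
    have "0 \<le> p" "p \<le> d"
      using r d by (auto simp: r_eq zero_le_divide_iff divide_le_eq_1)
    moreover have "d \<le> ?D"
      using r pd by (simp add: denom_def)
    ultimately show "r \<in> (\<lambda>(p, d). of_int p / of_int d) ` ({0..?D} \<times> {1..?D})"
      using d r_eq by (auto intro!: image_eqI[of _ _ "(p, d)"])
  qed
qed simp

lemma LFP_less:
  assumes "0 < u"
  shows "LFP u < u"
proof -
  have "0 \<in> {r. 0 \<le> r \<and> r \<le> 1/2 \<and> r < u \<and> denom r \<le> denom u}"
    using assms quotient_of_denom_pos'[of u] by (simp add: denom_def)
  then have "LFP u \<in> {r. 0 \<le> r \<and> r \<le> 1/2 \<and> r < u \<and> denom r \<le> denom u}"
    unfolding LFP_def using finite_LFP_candidates by (intro Max_in) auto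
  then show ?thesis
    by simp
qed

lemma denom_between_Farey_neighbours:
  fixes a b m n :: nat and r :: rat
  assumes ab: "b * m = a * n + 1" and "0 < b" and "0 < n"
    and "of_nat a / of_nat b < r" and "r < of_nat m / of_nat n"
  shows "int b + int n \<le> denom r"
proof -
  obtain p d where pd: "quotient_of r = (p, d)"
    by (cases "quotient_of r")
  have d: "0 < d" and r_eq: "r = of_int p / of_int d"
    using quotient_of_denom_pos[OF pd] quotient_of_div[OF pd] by simp_all
  have "of_int (int a) / of_int (int b) < (of_int p / of_int d :: rat)"
    using assms(4) r_eq by simp
  then have "(of_int (int a * d) :: rat) < of_int (p * int b)"
    using d \<open>0 < b\<close> by (simp add: field_simps)
  then have "int a * d < p * int b"
    by (simp only: of_int_less_iff)
  moreover have "(of_int p / of_int d :: rat) < of_int (int m) / of_int (int n)"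
    using assms(5) r_eq by simp
  then have "(of_int (p * int n) :: rat) < of_int (int m * d)"
    using d \<open>0 < n\<close> by (simp add: field_simps)
  then have "p * int n < int m * d"
    by (simp only: of_int_less_iff)
  moreover have "int b * int m = int a * int n + 1"
    using ab by (metis of_nat_1 of_nat_add of_nat_mult)
  ultimately have "int b + int n \<le> d"
    using Farey_denominator_bound by simp
  then show ?thesis
    using pd by (simp add: denom_def)
qed

lemma LFP_Farey_neighbour:
  fixes a b m n :: nat
  assumes ab: "b * m = a * n + 1" and "0 < b" and "b \<le> n" and "2 * m \<le> n"
  shows "LFP (of_nat m / of_nat n) = of_nat a / of_nat b"
proof -
  let ?q = "of_nat m / of_nat n :: rat"
  let ?C = "{r. 0 \<le> r \<and> r \<le> 1/2 \<and> r < ?q \<and> denom r \<le> denom ?q}"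
  have "0 < m"
    using ab by (cases m) simp_all
  then have "0 < n"
    using assms(4) by simp
  have den: "denom ?q = int n"
    using Farey_neighbour_coprime[OF ab] \<open>0 < n\<close> by (simp add: denom_of_nat_divide)
  have "a * n < m * b"
    using ab by (simp add: mult.commute)
  then have "(of_nat a :: rat) * of_nat n < of_nat m * of_nat b"
    by (metis of_nat_less_iff of_nat_mult)
  then have less: "of_nat a / of_nat b < ?q"
    using \<open>0 < b\<close> \<open>0 < n\<close> by (simp add: field_simps)
  moreover have "?q \<le> 1/2"
    using assms(4) \<open>0 < n\<close> by (simp add: field_simps)
  ultimately have "of_nat a / of_nat b \<le> (1/2 :: rat)"
    by linarith
  moreover have "denom (of_nat a / of_nat b) = int b"
    using Farey_neighbour_coprime[OF ab] \<open>0 < b\<close> by (simp add: denom_of_nat_divide)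
  ultimately have mem: "of_nat a / of_nat b \<in> ?C"
    using less den \<open>b \<le> n\<close> by simp
  have upper: "r \<le> of_nat a / of_nat b" if "r \<in> ?C" for r
    using denom_between_Farey_neighbours[OF ab \<open>0 < b\<close> \<open>0 < n\<close>, of r] that den \<open>0 < b\<close>
    by force
  show ?thesis
    unfolding LFP_def using mem upper finite_LFP_candidates by (intro Max_eqI) auto
qed

lemma LFS_LFP_zero:
  assumes "LFP q = 0"
  shows "LFS q = {0}"
proof -
  have "x = 0" if "x \<in> LFS q" for x
    using that by induction (use assms in auto)
  then show ?thesis
    using LFS.first[of q] assms by auto
qed

lemma LFS_unfold:
  assumes "0 < LFP q"
  shows "LFS q = insert (LFP q) (LFS (LFP q))"
proof
  show "LFS q \<subseteq> insert (LFP q) (LFS (LFP q))"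
  proof
    fix x
    assume "x \<in> LFS q"
    then show "x \<in> insert (LFP q) (LFS (LFP q))"
      by induction (use assms in \<open>auto intro: LFS.intros\<close>)
  qed
  show "insert (LFP q) (LFS (LFP q)) \<subseteq> LFS q"
  proof
    fix x
    assume "x \<in> insert (LFP q) (LFS (LFP q))"
    then consider "x = LFP q" | "x \<in> LFS (LFP q)"
      by blast
    then show "x \<in> LFS q"
    proof cases
      case 2
      then show ?thesis
        by induction (use assms in \<open>auto intro: LFS.intros\<close>)
    qed (simp add: LFS.first)
  qed
qed

lemma LFS_less:
  assumes "0 < q" and "x \<in> LFS q"
  shows "x < q"
  using assms(2) by induction (use assms(1) LFP_less in \<open>force+\<close>)

(* Since m = ceil(m/a) * a - (-m) mod a, this counts the steps of the negative
   (Hirzebruch-Jung) continued fraction expansion of m/a. *)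
function neg_cf_length :: "int \<Rightarrow> int \<Rightarrow> nat" where
  "neg_cf_length a m = (if a \<le> 0 then 0 else Suc (neg_cf_length ((- m) mod a) a))"
  by auto
termination
  by (relation "measure (\<lambda>(a, m). nat a)") auto

declare neg_cf_length.simps [simp del]

lemma card_LFS_Farey_neighbour:
  fixes a b m n :: nat
  assumes "b * m = a * n + 1" and "0 < b" and "b \<le> n" and "2 * m < n"
  shows "card (LFS (of_nat m / of_nat n)) = Suc (neg_cf_length (int a) (int m))"
  using assms
proof (induction m arbitrary: n a b rule: less_induct)
  case (less m)
  have LFP: "LFP (of_nat m / of_nat n) = of_nat a / of_nat b"
    using LFP_Farey_neighbour less.prems by simp
  show ?case
  proof (cases "a = 0")
    case True
    then show ?thesis
      using LFP LFS_LFP_zero by (simp add: neg_cf_length.simps)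
  next
    case False
    have "a < m"
      using Farey_neighbour_less less.prems(1,3) by blast
    have "2 * a * n < 2 * b * m"
      using less.prems(1) by simp
    also have "\<dots> \<le> b * n"
      using less.prems(4) by simp
    finally have "2 * a < b"
      by simp
    then have "1 < b"
      using False by simp
    then obtain a' b' where ab': "b' * a = a' * b + 1" "0 < b'" "b' \<le> b"
      using Farey_neighbour_exists Farey_neighbour_coprime(1)[OF less.prems(1)] by metis
    have IH: "card (LFS (of_nat a / of_nat b)) = Suc (neg_cf_length (int a') (int a))"
      using less.IH[OF \<open>a < m\<close> ab'] \<open>2 * a < b\<close> by simp
    have pos: "0 < (of_nat a / of_nat b :: rat)"
      using False less.prems(2) by simp
    then have "LFS (of_nat m / of_nat n) = insert (of_nat a / of_nat b) (LFS (of_nat a / of_nat b))"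
      using LFS_unfold[of "of_nat m / of_nat n"] LFP by simp
    moreover have "of_nat a / of_nat b \<notin> LFS (of_nat a / of_nat b)"
      using LFS_less[OF pos] by blast
    moreover have "finite (LFS (of_nat a / of_nat b))"
      using IH card.infinite by fastforce
    moreover have "neg_cf_length (int a) (int m) = Suc (neg_cf_length (int a') (int a))"
      using False Farey_neighbour_numerator_step[OF less.prems(1) ab'(1,3)]
      by (simp add: neg_cf_length.simps[of "int a"])
    ultimately show ?thesis
      using IH by simp
  qed
qed

section \<open>Record minima of residues\<close>

definition record_minima :: "int \<Rightarrow> int \<Rightarrow> int set" where
  "record_minima c M =
     {z. 1 \<le> z \<and> z \<le> M - 1 \<and> (\<forall>z'. 1 \<le> z' \<and> z' < z \<longrightarrow> z * c mod M < z' * c mod M)}"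

lemma finite_record_minima: "finite (record_minima c M)"
  by (rule finite_subset[of _ "{1..M - 1}"]) (auto simp: record_minima_def)

lemma record_minima_mod: "record_minima (c mod M) M = record_minima c M"
  unfolding record_minima_def by (simp add: mod_mult_right_eq)

lemma small_residue_quotient:
  fixes a M z :: int
  assumes "0 < a" and "a < M" and "1 \<le> z" and "z \<le> M - 1" and "z * a mod M < a"
  shows "1 \<le> z * a div M" and "z * a div M \<le> a - 1"
    and "z * a div M * (- M) mod a = z * a mod M"
proof -
  have split: "z * a = z * a div M * M + z * a mod M"
    by simp
  have "0 \<le> z * a mod M"
    using assms(1,2) by simp
  have "1 * a \<le> z * a"
    using assms(1,3) by (intro mult_right_mono) simp_all
  then have "0 < z * a div M * M"
    using split assms(5) by linarith
  then show "1 \<le> z * a div M"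
    using assms(1,2) by (simp add: zero_less_mult_iff)
  have "z * a \<le> (M - 1) * a"
    using assms(1,4) by (intro mult_right_mono) simp_all
  moreover have "(M - 1) * a = a * M - a"
    by (simp add: algebra_simps)
  ultimately have "z * a div M * M < a * M"
    using split \<open>0 \<le> z * a mod M\<close> assms(1) by linarith
  then show "z * a div M \<le> a - 1"
    using assms(1,2) by (simp add: mult_less_cancel_right)
  have "z * a div M * (- M) = z * a mod M + a * (- z)"
    using split by (simp add: algebra_simps)
  then have "z * a div M * (- M) mod a = z * a mod M mod a"
    by (simp only: mod_mult_self2)
  then show "z * a div M * (- M) mod a = z * a mod M"
    using assms(5) \<open>0 \<le> z * a mod M\<close> by simp
qed

lemma small_residue_quotient_less:
  fixes a M z z' :: int
  assumes "0 < M" and "z' * a mod M < a" and "z < z'"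
  shows "z * a div M < z' * a div M"
proof -
  have "(z' * a div M - z * a div M) * M = (z' - z) * a + z * a mod M - z' * a mod M"
    by (simp add: algebra_simps)
  moreover have "0 < a"
    using assms(1,2) by (smt (verit) pos_mod_sign)
  then have "a \<le> (z' - z) * a"
    using assms(3) by simp
  moreover have "0 \<le> z * a mod M"
    using assms(1) by simp
  ultimately have "0 < (z' * a div M - z * a div M) * M"
    using assms(2) by linarith
  then show ?thesis
    using assms(1) by (simp add: zero_less_mult_iff)
qed

lemma small_residue_quotient_surj:
  fixes a M j :: int
  assumes "0 < a" and "a < M" and "1 \<le> j" and "j \<le> a - 1"
  obtains z where "1 \<le> z" and "z \<le> M - 1" and "z * a mod M < a" and "z * a div M = j"
proof
  define w where "w = j * (- M) mod a"
  define z where "z = - (j * (- M) div a)"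
  have w: "0 \<le> w" "w < a"
    using assms(1) by (simp_all add: w_def)
  have za: "z * a = j * M + w"
    unfolding z_def w_def by (simp add: algebra_simps minus_mod_eq_mult_div [symmetric])
  then show "z * a mod M < a" and "z * a div M = j"
    using w assms(2) by simp_all
  have "0 < z * a"
    using za w assms(2,3) by (smt (verit) mult_pos_pos)
  then show "1 \<le> z"
    using assms(1) by (simp add: zero_less_mult_iff)
  have "j * M \<le> (a - 1) * M"
    using assms(1,2,4) by (intro mult_right_mono) simp_all
  then have "z * a < M * a"
    using za w assms(2) by (simp add: algebra_simps)
  then show "z \<le> M - 1"
    using assms(1) by (simp add: mult_less_cancel_right)
qed

lemma record_minima_small_residue:
  fixes a M z :: int
  assumes "0 < a" and "a < M" and "z \<in> record_minima a M" and "z \<noteq> 1"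
  shows "z * a mod M < a"
proof -
  have "z * a mod M < 1 * a mod M"
    using assms(3,4) unfolding record_minima_def by force
  then show ?thesis
    using assms(1,2) by simp
qed

(* A record z other than 1 has residue below 1 * a mod M = a; writing z a = j M + r with
   0 <= r < a, the quotient j is increasing in z and r = (-j M) mod a. *)
lemma quotient_mem_record_minima:
  fixes a M z :: int
  assumes "0 < a" and "a < M" and z: "z \<in> record_minima a M" and "z \<noteq> 1"
  shows "z * a div M \<in> record_minima (- M) a"
  unfolding record_minima_def
proof (intro CollectI conjI allI impI)
  have z_range: "1 \<le> z" "z \<le> M - 1"
    using z by (simp_all add: record_minima_def)
  have z_small: "z * a mod M < a"
    using record_minima_small_residue assms by blast
  show "1 \<le> z * a div M" "z * a div M \<le> a - 1"
    using small_residue_quotient(1,2)[OF assms(1,2) z_range z_small] by simp_all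
  fix j'
  assume j': "1 \<le> j' \<and> j' < z * a div M"
  then obtain z' where z': "1 \<le> z'" "z' \<le> M - 1" "z' * a mod M < a" and j'_eq: "z' * a div M = j'"
    using small_residue_quotient_surj[OF assms(1,2), of j'] \<open>z * a div M \<le> a - 1\<close> by auto
  have "z' < z"
  proof (rule ccontr)
    assume "\<not> z' < z"
    then have "z * a div M \<le> z' * a div M"
      using small_residue_quotient_less[of M z' a z] z'(3) assms(1,2) by (cases "z = z'") auto
    then show False
      using j' j'_eq by simp
  qed
  then have "z * a mod M < z' * a mod M"
    using z z'(1) unfolding record_minima_def by auto
  then show "z * a div M * (- M) mod a < j' * (- M) mod a"
    using small_residue_quotient(3)[OF assms(1,2) z_range z_small]
      small_residue_quotient(3)[OF assms(1,2) z'] j'_eq by simp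
qed

lemma record_minima_quotient_onto:
  fixes a M j :: int
  assumes "0 < a" and "a < M" and j: "j \<in> record_minima (- M) a"
  obtains z where "z \<in> record_minima a M" and "z \<noteq> 1" and "z * a div M = j"
proof -
  have j_range: "1 \<le> j" "j \<le> a - 1"
    and j_min: "\<And>j'. 1 \<le> j' \<Longrightarrow> j' < j \<Longrightarrow> j * (- M) mod a < j' * (- M) mod a"
    using j unfolding record_minima_def by auto
  obtain z where z: "1 \<le> z" "z \<le> M - 1" "z * a mod M < a" and j_eq: "z * a div M = j"
    using small_residue_quotient_surj[OF assms(1,2) j_range] by blast
  have residue: "z * a div M * (- M) mod a = z * a mod M" if "1 \<le> z" "z \<le> M - 1" "z * a mod M < a" for z
    using small_residue_quotient(3)[OF assms(1,2) that] .
  have "z \<in> record_minima a M"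
    unfolding record_minima_def
  proof (intro CollectI conjI allI impI)
    show "1 \<le> z" "z \<le> M - 1"
      using z by simp_all
    fix z'
    assume z': "1 \<le> z' \<and> z' < z"
    show "z * a mod M < z' * a mod M"
    proof (cases "z' * a mod M < a")
      case True
      have "1 \<le> z' * a div M"
        using small_residue_quotient(1)[OF assms(1,2)] z z' True by simp
      moreover have "z' * a div M < j"
        using small_residue_quotient_less[of M z a z'] z z' j_eq assms(1,2) by simp
      ultimately have "j * (- M) mod a < z' * a div M * (- M) mod a"
        using j_min by blast
      then show ?thesis
        using residue[of z'] residue[OF z] z z' True j_eq by simp
    next
      case False
      then show ?thesis
        using z by simp
    qed
  qed
  moreover have "z \<noteq> 1"
    using z assms(1,2) by auto
  ultimately show thesis
    using that j_eq by blast
qed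

lemma record_minima_quotient_bij:
  fixes a M :: int
  assumes "0 < a" and "a < M"
  shows "bij_betw (\<lambda>z. z * a div M) (record_minima a M - {1}) (record_minima (- M) a)"
proof (rule bij_betw_imageI)
  show "inj_on (\<lambda>z. z * a div M) (record_minima a M - {1})"
  proof (rule linorder_inj_onI)
    fix z z'
    assume "z < z'" and "z' \<in> record_minima a M - {1}"
    then have "z' * a mod M < a"
      using record_minima_small_residue[OF assms] by blast
    then show "z * a div M \<noteq> z' * a div M"
      using small_residue_quotient_less[of M z' a z] \<open>z < z'\<close> assms by simp
  qed auto
  show "(\<lambda>z. z * a div M) ` (record_minima a M - {1}) = record_minima (- M) a"
  proof (intro equalityI subsetI)
    fix j
    assume "j \<in> (\<lambda>z. z * a div M) ` (record_minima a M - {1})"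
    then show "j \<in> record_minima (- M) a"
      using quotient_mem_record_minima[OF assms] by blast
  next
    fix j
    assume "j \<in> record_minima (- M) a"
    then obtain z where "z \<in> record_minima a M - {1}" and "j = z * a div M"
      using record_minima_quotient_onto[OF assms] by (metis Diff_iff singletonD)
    then show "j \<in> (\<lambda>z. z * a div M) ` (record_minima a M - {1})"
      by blast
  qed
qed

lemma card_record_minima_step:
  fixes a M :: int
  assumes "0 < a" and "a < M"
  shows "card (record_minima a M) = Suc (card (record_minima (- M) a))"
proof -
  have "1 \<in> record_minima a M"
    using assms by (simp add: record_minima_def)
  then have "card (record_minima a M) = Suc (card (record_minima a M - {1}))"
    by (rule card.remove[OF finite_record_minima])
  also have "card (record_minima a M - {1}) = card (record_minima (- M) a)"
    by (rule bij_betw_same_card[OF record_minima_quotient_bij[OF assms]])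
  finally show ?thesis .
qed

lemma card_record_minima:
  fixes a M :: int
  assumes "coprime a M" and "0 \<le> a" and "a < M"
  shows "card (record_minima a M) = neg_cf_length a M"
  using assms
proof (induction a M rule: neg_cf_length.induct)
  case (1 a M)
  show ?case
  proof (cases "a = 0")
    case True
    then have "record_minima a M = {}"
      using 1 by (auto simp: record_minima_def)
    then show ?thesis
      using True by (simp add: neg_cf_length.simps)
  next
    case False
    then have "0 < a"
      using 1 by simp
    have "coprime ((- M) mod a) a"
      using \<open>coprime a M\<close> \<open>0 < a\<close> by (simp add: coprime_commute)
    then have "card (record_minima ((- M) mod a) a) = neg_cf_length ((- M) mod a) a"
      using 1 \<open>0 < a\<close> by simp
    then show ?thesis
      using card_record_minima_step[OF \<open>0 < a\<close> \<open>a < M\<close>] \<open>0 < a\<close>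
      by (simp add: record_minima_mod neg_cf_length.simps[of a])
  qed
qed

section \<open>Admissible integers\<close>

lemma admissible_zero: "admissible m n 0"
proof -
  have "(LEAST K. (0 + K * m) mod n = 0) = 0"
    by (rule Least_eq_0) simp
  then have "orbit m n 0 0 = {0}"
    unfolding orbit_def Let_def by auto
  then show ?thesis
    unfolding admissible_def by auto
qed

lemma mult_mod_nonzero:
  fixes b n x :: nat
  assumes "coprime b n" and "0 < x" and "x < n"
  shows "x * b mod n \<noteq> 0"
proof
  assume "x * b mod n = 0"
  then have "n dvd x"
    using assms(1) by (simp add: mod_eq_0_iff_dvd coprime_commute coprime_dvd_mult_left_iff)
  then show False
    using assms(2,3) by (auto dest: dvd_imp_le)
qed

lemma orbit_point_iff:
  fixes m n b k j t :: nat
  assumes inv: "[m * b = 1] (mod n)" and "t < n"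
  shows "(k + j * m) mod n = t \<longleftrightarrow> (k * b mod n + j) mod n = t * b mod n"
proof -
  have "coprime (m * b) n"
    using cong_imp_coprime[OF cong_sym[OF inv]] by simp
  then have "coprime b n"
    by simp
  have shift: "[(k + j * m) * b = k * b mod n + j] (mod n)"
  proof -
    have "[k * b + j * (m * b) = k * b mod n + j * 1] (mod n)"
      by (intro cong_add cong_mult cong_refl inv) (simp add: cong_def)
    then show ?thesis
      by (simp add: algebra_simps)
  qed
  have "(k + j * m) mod n = t \<longleftrightarrow> [k + j * m = t] (mod n)"
    using \<open>t < n\<close> by (simp add: cong_def)
  also have "\<dots> \<longleftrightarrow> [(k + j * m) * b = t * b] (mod n)"
    using \<open>coprime b n\<close> by (simp add: cong_mult_rcancel_nat)
  also have "\<dots> \<longleftrightarrow> [k * b mod n + j = t * b] (mod n)"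
    using shift by (meson cong_sym cong_trans)
  finally show ?thesis
    by (simp add: cong_def)
qed

(* Multiplication by b maps the orbit k, k + m, k + 2 m, ... onto the consecutive residues
   k b, k b + 1, ..., which first reach 0 (mod n) at n. *)
lemma orbit_eq_residue_run:
  fixes m n b k :: nat
  assumes inv: "[m * b = 1] (mod n)" and "0 < k" and "k < n"
  shows "orbit m n k 0 = {(k + j * m) mod n | j. j \<le> n - k * b mod n}"
proof -
  have "0 < k * b mod n"
    using mult_mod_nonzero[OF _ assms(2,3)] cong_imp_coprime[OF cong_sym[OF inv]] by simp
  have "(LEAST K. (k + K * m) mod n = 0) = n - k * b mod n"
  proof (rule Least_equality)
    show "(k + (n - k * b mod n) * m) mod n = 0"
      using orbit_point_iff[OF inv, where t = 0 and k = k and j = "n - k * b mod n"] \<open>k < n\<close>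
      by simp
  next
    fix K
    assume "(k + K * m) mod n = 0"
    then have "n dvd k * b mod n + K"
      using orbit_point_iff[OF inv, where t = 0 and k = k and j = K] \<open>k < n\<close>
      by (simp add: mod_eq_0_iff_dvd)
    then show "n - k * b mod n \<le> K"
      using \<open>0 < k * b mod n\<close> by (auto dest: dvd_imp_le)
  qed
  then show ?thesis
    unfolding orbit_def Let_def by simp
qed

lemma mem_orbit_iff:
  fixes m n b k y :: nat
  assumes inv: "[m * b = 1] (mod n)" and "0 < k" and "k < n" and "0 < y" and "y < n"
  shows "y \<in> orbit m n k 0 \<longleftrightarrow> k * b mod n \<le> y * b mod n"
proof -
  define u where "u = k * b mod n"
  define v where "v = y * b mod n"
  have "coprime b n"
    using cong_imp_coprime[OF cong_sym[OF inv]] by simp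
  then have "0 < v" "v < n" "u < n"
    using mult_mod_nonzero assms(2-) by (auto simp: u_def v_def)
  have hits: "(k + j * m) mod n = y \<longleftrightarrow> (u + j) mod n = v" for j
    using orbit_point_iff[OF inv \<open>y < n\<close>, where k = k and j = j] unfolding u_def v_def .
  show ?thesis
  proof
    assume "y \<in> orbit m n k 0"
    then obtain j where "j \<le> n - u" and "(k + j * m) mod n = y"
      using orbit_eq_residue_run[OF inv assms(2,3)] unfolding u_def by auto
    moreover from this(2) have "(u + j) mod n = v"
      using hits by simp
    moreover have "u + j \<noteq> n"
      using \<open>(u + j) mod n = v\<close> \<open>0 < v\<close> by auto
    ultimately have "u + j = v"
      using \<open>u < n\<close> by simp
    then show "k * b mod n \<le> y * b mod n"
      unfolding u_def v_def by simp
  next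
    assume "k * b mod n \<le> y * b mod n"
    then have "(u + (v - u)) mod n = v" and "v - u \<le> n - u"
      using \<open>v < n\<close> by (simp_all add: u_def v_def)
    then have "(k + (v - u) * m) mod n = y"
      using hits by simp
    then show "y \<in> orbit m n k 0"
      using orbit_eq_residue_run[OF inv assms(2,3)] \<open>v - u \<le> n - u\<close> unfolding u_def by auto
  qed
qed

lemma Farey_neighbour_residue:
  fixes a b m n y :: nat
  assumes ab: "b * m = a * n + 1" and "y < m" and "m < n"
  shows "m * (y * b mod n) = n * (y * a mod m) + y"
proof -
  define q where "q = y * a div m"
  define r where "r = y * a mod m"
  have "m * (y * b) = n * (y * a) + y"
    using arg_cong[OF ab, of "\<lambda>x. y * x"] by (simp add: algebra_simps)
  also have "y * a = m * q + r"
    by (simp add: q_def r_def)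
  finally have expand: "m * (y * b) = m * (n * q) + (n * r + y)"
    by (simp add: algebra_simps)
  then have "m dvd m * (n * q) + (n * r + y)"
    by (metis dvd_triv_left)
  then obtain t where t: "n * r + y = m * t"
    by (auto simp: dvd_add_right_iff)
  have "r < m"
    using \<open>y < m\<close> by (simp add: r_def)
  then have "n * r + n \<le> n * m"
    using mult_le_mono2[of "r + 1" m n] by simp
  then have "m * t < n * m"
    using t \<open>y < m\<close> \<open>m < n\<close> by linarith
  then have "t < n"
    by simp
  have "m * (y * b) = m * (n * q + t)"
    using expand t by (simp add: algebra_simps)
  then have "y * b = n * q + t"
    using \<open>y < m\<close> by simp
  then have "y * b mod n = t"
    using \<open>t < n\<close> by simp
  then show ?thesis
    using t by (simp add: r_def)
qed

lemma Farey_neighbour_residue_less_iff: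
  fixes a b m n k y :: nat
  assumes ab: "b * m = a * n + 1" and "m < n" and "k < y" and "y < m"
  shows "y * b mod n < k * b mod n \<longleftrightarrow> y * a mod m < k * a mod m"
proof -
  have "y * b mod n < k * b mod n \<longleftrightarrow> m * (y * b mod n) < m * (k * b mod n)"
    using assms(3,4) by simp
  also have "\<dots> \<longleftrightarrow> n * (y * a mod m) + y < n * (k * a mod m) + k"
    using Farey_neighbour_residue[OF ab] assms(2-4) by simp
  also have "\<dots> \<longleftrightarrow> y * a mod m < k * a mod m"
  proof
    assume "n * (y * a mod m) + y < n * (k * a mod m) + k"
    then have "n * (y * a mod m) < n * (k * a mod m)"
      using \<open>k < y\<close> by linarith
    then show "y * a mod m < k * a mod m"
      by simp
  next
    assume "y * a mod m < k * a mod m"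
    then have "n * (y * a mod m + 1) \<le> n * (k * a mod m)"
      by (intro mult_le_mono2) simp
    then show "n * (y * a mod m) + y < n * (k * a mod m) + k"
      using assms(2,4) by simp
  qed
  finally show ?thesis .
qed

lemma admissible_iff_residues_decrease:
  fixes a b m n k :: nat
  assumes ab: "b * m = a * n + 1" and "m < n" and "0 < k" and "k < m"
  shows "admissible m n k \<longleftrightarrow> (\<forall>y. k < y \<and> y < m \<longrightarrow> y * a mod m < k * a mod m)"
proof -
  have inv: "[m * b = 1] (mod n)"
    unfolding cong_def mult.commute[of m] ab by (rule mod_mult_self3)
  have "admissible m n k \<longleftrightarrow> (\<forall>y. k < y \<and> y < m \<longrightarrow> y \<notin> orbit m n k 0)"
    unfolding admissible_def disjoint_iff atLeastAtMost_iff using assms(4) by auto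
  also have "\<dots> \<longleftrightarrow> (\<forall>y. k < y \<and> y < m \<longrightarrow> y * b mod n < k * b mod n)"
  proof -
    have "y \<notin> orbit m n k 0 \<longleftrightarrow> y * b mod n < k * b mod n" if "k < y" and "y < m" for y
      using mem_orbit_iff[OF inv, of k y] that assms(2-4) by auto
    then show ?thesis
      by blast
  qed
  also have "\<dots> \<longleftrightarrow> (\<forall>y. k < y \<and> y < m \<longrightarrow> y * a mod m < k * a mod m)"
    using Farey_neighbour_residue_less_iff[OF ab \<open>m < n\<close>] by blast
  finally show ?thesis .
qed

lemma reflected_residue:
  fixes a m k :: nat
  assumes "coprime a m" and "0 < k" and "k < m"
  shows "(int m - int k) * int a mod int m = int m - int (k * a mod m)"
proof -
  have "k * a mod m \<noteq> 0"
    using mult_mod_nonzero[OF assms] .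
  then have nonzero: "int (k * a) mod int m \<noteq> 0"
    by (metis of_nat_eq_0_iff of_nat_mod)
  have "(int m - int k) * int a mod int m = (- int (k * a) + int a * int m) mod int m"
    by (simp add: algebra_simps)
  also have "\<dots> = (- int (k * a)) mod int m"
    by (rule mod_mult_self1)
  also have "\<dots> = int m - int (k * a) mod int m"
    using nonzero by (simp add: zmod_zminus1_eq_if)
  finally show ?thesis
    by (simp only: of_nat_mod)
qed

lemma all_int_interval_reflect:
  fixes m k :: nat
  shows "(\<forall>z. 1 \<le> z \<and> z < int m - int k \<longrightarrow> P z) \<longleftrightarrow> (\<forall>y. k < y \<and> y < m \<longrightarrow> P (int m - int y))"
proof (intro iffI allI impI)
  fix z :: int
  assume "\<forall>y. k < y \<and> y < m \<longrightarrow> P (int m - int y)" and z: "1 \<le> z \<and> z < int m - int k"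
  moreover have "k < nat (int m - z)" and "nat (int m - z) < m"
    using z by auto
  ultimately have "P (int m - int (nat (int m - z)))"
    by blast
  then show "P z"
    using z by simp
qed auto

lemma admissible_iff_record_minima:
  fixes a b m n k :: nat
  assumes ab: "b * m = a * n + 1" and "m < n" and "0 < k" and "k < m"
  shows "admissible m n k \<longleftrightarrow> int m - int k \<in> record_minima (int a) (int m)"
proof -
  have cop: "coprime a m"
    using Farey_neighbour_coprime(4)[OF ab] .
  have "int m - int k \<in> record_minima (int a) (int m) \<longleftrightarrow>
      (\<forall>y. k < y \<and> y < m \<longrightarrow> (int m - int k) * int a mod int m < (int m - int y) * int a mod int m)"
    unfolding record_minima_def using assms(3,4) all_int_interval_reflect by auto
  also have "\<dots> \<longleftrightarrow> (\<forall>y. k < y \<and> y < m \<longrightarrow> y * a mod m < k * a mod m)"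
    using reflected_residue[OF cop] assms(3,4) by auto
  finally show ?thesis
    using admissible_iff_residues_decrease[OF assms] by simp
qed

lemma card_admissible_set:
  fixes a b m n :: nat
  assumes ab: "b * m = a * n + 1" and "m < n"
  shows "card (admissible_set m n) = Suc (card (record_minima (int a) (int m)))"
proof -
  have "0 < m"
    using ab by (cases m) simp_all
  have adm_less: "k < m" if "k \<in> admissible_set m n" for k
    using that \<open>0 < m\<close> unfolding admissible_set_def admissible_def by auto
  have "bij_betw (\<lambda>k. int m - int k) (admissible_set m n - {0}) (record_minima (int a) (int m))"
  proof (rule bij_betw_imageI)
    show "inj_on (\<lambda>k. int m - int k) (admissible_set m n - {0})"
      by (rule inj_onI) simp
    show "(\<lambda>k. int m - int k) ` (admissible_set m n - {0}) = record_minima (int a) (int m)"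
    proof (intro equalityI subsetI)
      fix z
      assume "z \<in> (\<lambda>k. int m - int k) ` (admissible_set m n - {0})"
      then obtain k where "k \<in> admissible_set m n" "0 < k" "z = int m - int k"
        by auto
      then show "z \<in> record_minima (int a) (int m)"
        using admissible_iff_record_minima[OF ab \<open>m < n\<close>] adm_less
        by (auto simp: admissible_set_def)
    next
      fix z
      assume z: "z \<in> record_minima (int a) (int m)"
      then have "1 \<le> z" "z \<le> int m - 1"
        by (simp_all add: record_minima_def)
      then have "0 < nat (int m - z)" "nat (int m - z) < m" "z = int m - int (nat (int m - z))"
        by auto
      then show "z \<in> (\<lambda>k. int m - int k) ` (admissible_set m n - {0})"
        using admissible_iff_record_minima[OF ab \<open>m < n\<close>] z
        by (auto simp: admissible_set_def intro!: image_eqI[of _ _ "nat (int m - z)"])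
    qed
  qed
  then have "card (admissible_set m n - {0}) = card (record_minima (int a) (int m))"
    by (rule bij_betw_same_card)
  moreover have "finite (admissible_set m n)"
    using adm_less by (meson finite_lessThan finite_subset lessThan_iff subsetI)
  moreover have "0 \<in> admissible_set m n"
    by (simp add: admissible_set_def admissible_zero)
  ultimately show ?thesis
    using card.remove by metis
qed

theorem corollary2p20:
  fixes m n :: nat
  assumes "coprime m n" and "0 < m" and "2 * m < n"
  shows "card (admissible_set m n) = card (LFS (of_nat m / of_nat n))"
proof -
  have "1 < n"
    using assms(2,3) by simp
  then obtain a b where ab: "b * m = a * n + 1" and "0 < b" and "b \<le> n"
    by (rule Farey_neighbour_exists[OF assms(1)])
  have "card (LFS (of_nat m / of_nat n)) = Suc (neg_cf_length (int a) (int m))"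
    using card_LFS_Farey_neighbour[OF ab \<open>0 < b\<close> \<open>b \<le> n\<close> assms(3)] .
  moreover have "card (admissible_set m n) = Suc (card (record_minima (int a) (int m)))"
    using card_admissible_set[OF ab] assms(3) by simp
  moreover have "card (record_minima (int a) (int m)) = neg_cf_length (int a) (int m)"
    using card_record_minima Farey_neighbour_coprime(4)[OF ab] Farey_neighbour_less[OF ab \<open>b \<le> n\<close>]
    by simp
  ultimately show ?thesis
    by simp
qed

end
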